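(* Let \(a,b,c\) be positive integers, \(m\) a positive integer that is not a perfect square, with \(\gcd(am,b^2-c^2m)=1\), and let \(A,B\in\mathbb Z\). Then there is a unique \((\bar x,\bar y,\bar z,\bar w)\in\mathbb Z^4\) with \(0\leq\bar z<am\) and \(0\leq\bar w<a\) satisfying \(a\sqrt m(\bar x+\bar y\sqrt m)+(b+c\sqrt m)(\bar z+\bar w\sqrt m)=A+B\sqrt m\). *)

theory Defs
  imports Complex_Main
begin

end

theory Submission
  imports Defs
begin

text \<open>
  Multiplying out and comparing coefficients of \<open>1\<close> and \<open>\<surd>m\<close> (legitimate since \<open>\<surd>m\<close> is
  irrational) turns the equation into the integer system
  \<open>a m y + b z + c m w = A\<close>, \<open>a x + c z + b w = B\<close>.
  For the difference of two solutions, eliminating with \<open>D = b\<^sup>2 - c\<^sup>2 m\<close> shows that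
  \<open>D z\<close> is a multiple of \<open>a m\<close> and then \<open>D w\<close> a multiple of \<open>a\<close>; as \<open>D\<close> is a unit modulo
  \<open>a m\<close>, the range conditions force \<open>z = w = 0\<close>, hence \<open>x = y = 0\<close>.
  Conversely a Bezout inverse of \<open>D\<close> modulo \<open>a m\<close> produces a solution, which is then
  reduced into the prescribed ranges.
\<close>

lemma of_int_add_mult_sqrt_eq_0_iff:
  fixes m P Q :: int
  assumes nonsquare: "\<not> (\<exists>k. m = k ^ 2)" and "0 \<le> m"
  shows "of_int P + of_int Q * sqrt (of_int m) = (0::real) \<longleftrightarrow> P = 0 \<and> Q = 0"
proof
  assume eq: "of_int P + of_int Q * sqrt (of_int m) = (0::real)"
  have "Q = 0"
  proof (rule ccontr)
    assume "Q \<noteq> 0"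
    have "(of_int Q * sqrt (of_int m))\<^sup>2 = (of_int P::real)\<^sup>2"
      using eq by (simp add: eq_neg_iff_add_eq_0[symmetric])
    then have "of_int (Q\<^sup>2 * m) = (of_int (P\<^sup>2)::real)"
      using \<open>0 \<le> m\<close> by (simp add: power_mult_distrib)
    then have squares: "Q\<^sup>2 * m = P\<^sup>2"
      by (simp only: of_int_eq_iff)
    then have "Q\<^sup>2 dvd P\<^sup>2"
      by (metis dvd_triv_left)
    then have "Q dvd P"
      by simp
    then obtain t where "P = Q * t" ..
    with squares \<open>Q \<noteq> 0\<close> have "m = t\<^sup>2"
      by (simp add: power_mult_distrib)
    with nonsquare show False by blast
  qed
  with eq show "P = 0 \<and> Q = 0" by simp
qed simp

lemma of_int_add_mult_sqrt_eq_iff: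
  fixes m P Q P' Q' :: int
  assumes "\<not> (\<exists>k. m = k ^ 2)" and "0 \<le> m"
  shows "of_int P + of_int Q * sqrt (of_int m) = (of_int P' + of_int Q' * sqrt (of_int m) :: real)
    \<longleftrightarrow> P = P' \<and> Q = Q'"
  using of_int_add_mult_sqrt_eq_0_iff[OF assms, of "P - P'" "Q - Q'"]
  by (simp add: algebra_simps)

lemma sqrt_equation_iff_linear_system:
  fixes a b c m A B x y z w :: int
  assumes "\<not> (\<exists>k. m = k ^ 2)" and "0 \<le> m"
  shows "of_int a * sqrt (of_int m) * (of_int x + of_int y * sqrt (of_int m))
      + (of_int b + of_int c * sqrt (of_int m)) * (of_int z + of_int w * sqrt (of_int m))
      = of_int A + of_int B * sqrt (of_int m)
    \<longleftrightarrow> a * m * y + b * z + c * m * w = A \<and> a * x + c * z + b * w = B"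
proof -
  have expansion: "of_int a * sqrt (of_int m) * (of_int x + of_int y * sqrt (of_int m))
      + (of_int b + of_int c * sqrt (of_int m)) * (of_int z + of_int w * sqrt (of_int m))
    = of_int (a * m * y + b * z + c * m * w) + of_int (a * x + c * z + b * w) * (sqrt (of_int m) :: real)"
    using \<open>0 \<le> m\<close> by (simp add: algebra_simps)
  show ?thesis
    by (simp only: expansion of_int_add_mult_sqrt_eq_iff[OF assms])
qed

lemma int_dvd_abs_less_imp_eq_0:
  fixes n d :: int
  assumes "n dvd d" and "\<bar>d\<bar> < \<bar>n\<bar>"
  shows "d = 0"
proof (rule ccontr)
  assume "d \<noteq> 0"
  with \<open>n dvd d\<close> have "\<bar>n\<bar> \<le> \<bar>d\<bar>"
    by (rule dvd_imp_le_int[rotated])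
  with \<open>\<bar>d\<bar> < \<bar>n\<bar>\<close> show False by simp
qed

lemma linear_system_homogeneous_trivial:
  fixes a b c m x y z w :: int
  assumes coprime: "coprime (a * m) (b\<^sup>2 - c\<^sup>2 * m)"
    and z: "\<bar>z\<bar> < \<bar>a * m\<bar>" and w: "\<bar>w\<bar> < \<bar>a\<bar>"
    and eq1: "a * m * y + b * z + c * m * w = 0" and eq2: "a * x + c * z + b * w = 0"
  shows "x = 0 \<and> y = 0 \<and> z = 0 \<and> w = 0"
proof -
  define D where "D = b\<^sup>2 - c\<^sup>2 * m"
  have bz: "b * z + c * m * w = - (a * m * y)" and cz: "c * z + b * w = - (a * x)"
    using eq1 eq2 by linarith+
  have "D * z = b * (b * z + c * m * w) - c * m * (c * z + b * w)"
    unfolding D_def by algebra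
  also have "\<dots> = a * m * (c * x - b * y)"
    unfolding bz cz by algebra
  finally have "a * m dvd D * z" by simp
  with coprime have "a * m dvd z"
    by (simp add: D_def coprime_dvd_mult_right_iff)
  then have "z = 0"
    using z by (rule int_dvd_abs_less_imp_eq_0)
  have "m \<noteq> 0" using z by auto
  from bz \<open>z = 0\<close> have "m * (c * w) = m * (- a * y)" by algebra
  with \<open>m \<noteq> 0\<close> have cw: "c * w = - a * y" by (metis mult_cancel_left)
  from cz \<open>z = 0\<close> have bw: "b * w = - a * x" by simp
  have "D * w = b * (b * w) - c * m * (c * w)"
    unfolding D_def by algebra
  also have "\<dots> = a * (c * m * y - b * x)"
    unfolding cw bw by algebra
  finally have "a dvd D * w" by simp
  with coprime have "a dvd w"
    by (simp add: D_def coprime_dvd_mult_right_iff)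
  then have "w = 0"
    using w by (rule int_dvd_abs_less_imp_eq_0)
  have "a \<noteq> 0" using w by auto
  with cw bw \<open>w = 0\<close> have "x = 0 \<and> y = 0" by simp
  with \<open>z = 0\<close> \<open>w = 0\<close> show ?thesis by simp
qed

lemma linear_system_solvable:
  fixes a b c m A B :: int
  assumes "0 < a" and "0 < m" and "coprime (a * m) (b\<^sup>2 - c\<^sup>2 * m)"
  obtains x y z w where "0 \<le> z" "z < a * m" "0 \<le> w" "w < a"
    "a * m * y + b * z + c * m * w = A" "a * x + c * z + b * w = B"
proof -
  obtain u v where bezout: "u * (a * m) + v * (b\<^sup>2 - c\<^sup>2 * m) = 1"
    using assms(3) bezout_int by (metis coprime_iff_gcd_eq_1)
  text \<open>
    In \<open>\<int>[\<surd>m]\<close>, \<open>v (b - c\<surd>m)\<close> inverts \<open>b + c\<surd>m\<close> modulo \<open>a\<surd>m\<close>, so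
    \<open>z\<^sub>0 + w\<^sub>0\<surd>m = v (b - c\<surd>m)(A + B\<surd>m)\<close> solves the system up to a multiple of
    \<open>a\<surd>m\<close>; replacing \<open>z\<^sub>0, w\<^sub>0\<close> by their residues changes \<open>z + w\<surd>m\<close> by
    \<open>a\<surd>m (l + k\<surd>m)\<close>, which is absorbed into \<open>x, y\<close>.
  \<close>
  define z\<^sub>0 where "z\<^sub>0 = v * (b * A - c * m * B)"
  define w\<^sub>0 where "w\<^sub>0 = v * (b * B - c * A)"
  define k where "k = z\<^sub>0 div (a * m)"
  define l where "l = w\<^sub>0 div a"
  have z\<^sub>0: "z\<^sub>0 = a * m * k + z\<^sub>0 mod (a * m)" and w\<^sub>0: "w\<^sub>0 = a * l + w\<^sub>0 mod a"
    unfolding k_def l_def by simp_all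
  show thesis
  proof
    show "0 \<le> z\<^sub>0 mod (a * m)" "z\<^sub>0 mod (a * m) < a * m" "0 \<le> w\<^sub>0 mod a" "w\<^sub>0 mod a < a"
      using assms(1,2) by simp_all
    show "a * m * (u * A + b * k + c * l) + b * (z\<^sub>0 mod (a * m)) + c * m * (w\<^sub>0 mod a) = A"
      using z\<^sub>0 w\<^sub>0 bezout unfolding z\<^sub>0_def w\<^sub>0_def by algebra
    show "a * (u * m * B + c * m * k + b * l) + c * (z\<^sub>0 mod (a * m)) + b * (w\<^sub>0 mod a) = B"
      using z\<^sub>0 w\<^sub>0 bezout unfolding z\<^sub>0_def w\<^sub>0_def by algebra
  qed
qed

lemma linear_system_ex1_reduced_solution:
  fixes a b c m A B :: int
  assumes "0 < a" and "0 < m" and coprime: "coprime (a * m) (b\<^sup>2 - c\<^sup>2 * m)"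
  shows "\<exists>!(x, y, z, w). 0 \<le> z \<and> z < a * m \<and> 0 \<le> w \<and> w < a \<and>
    a * m * y + b * z + c * m * w = A \<and> a * x + c * z + b * w = B"
proof -
  obtain x y z w where sol: "0 \<le> z" "z < a * m" "0 \<le> w" "w < a"
    "a * m * y + b * z + c * m * w = A" "a * x + c * z + b * w = B"
    using linear_system_solvable[OF assms] .
  show ?thesis
  proof (rule ex1I[of _ "(x, y, z, w)"])
    fix p
    assume "case p of (x', y', z', w') \<Rightarrow> 0 \<le> z' \<and> z' < a * m \<and> 0 \<le> w' \<and> w' < a \<and>
      a * m * y' + b * z' + c * m * w' = A \<and> a * x' + c * z' + b * w' = B"
    then obtain x' y' z' w' where p: "p = (x', y', z', w')" and sol': "0 \<le> z'" "z' < a * m"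
      "0 \<le> w'" "w' < a" "a * m * y' + b * z' + c * m * w' = A" "a * x' + c * z' + b * w' = B"
      by (cases p) auto
    have "x' - x = 0 \<and> y' - y = 0 \<and> z' - z = 0 \<and> w' - w = 0"
    proof (rule linear_system_homogeneous_trivial[OF coprime])
      show "\<bar>z' - z\<bar> < \<bar>a * m\<bar>" "\<bar>w' - w\<bar> < \<bar>a\<bar>"
        using sol sol' by auto
      show "a * m * (y' - y) + b * (z' - z) + c * m * (w' - w) = 0"
        using sol(5) sol'(5) by (simp add: algebra_simps)
      show "a * (x' - x) + c * (z' - z) + b * (w' - w) = 0"
        using sol(6) sol'(6) by (simp add: algebra_simps)
    qed
    with p show "p = (x, y, z, w)" by simp
  qed (use sol in simp)
qed

theorem corollary2:
  fixes a b c m A B :: int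
  assumes "a > 0" and "b > 0" and "c > 0" and "m > 0"
    and "\<not> (\<exists>k::int. m = k ^ 2)"
    and "gcd (a * m) (b ^ 2 - c ^ 2 * m) = 1"
  shows "\<exists>!(x, y, z, w). (0::int) \<le> z \<and> z < a * m \<and> 0 \<le> w \<and> w < a \<and>
    of_int a * sqrt (of_int m) * (of_int x + of_int y * sqrt (of_int m))
    + (of_int b + of_int c * sqrt (of_int m)) * (of_int z + of_int w * sqrt (of_int m))
    = of_int A + of_int B * sqrt (of_int m)"
proof -
  have "coprime (a * m) (b\<^sup>2 - c\<^sup>2 * m)"
    using assms(6) by (simp only: coprime_iff_gcd_eq_1)
  with \<open>a > 0\<close> \<open>m > 0\<close> show ?thesis
    using linear_system_ex1_reduced_solution
    by (simp only: sqrt_equation_iff_linear_system[OF assms(5) less_imp_le[OF \<open>m > 0\<close>]])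
qed

end
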